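(* The number of integers $N$ with $2^{i-1}\le N<2^i$ for which there exist antipalindromic numbers $A,B$ with $N=A/B$ is $\Omega(\sqrt{2}^{\,i})$ as $i\to\infty$.
   Context: A positive integer $n$ is antipalindromic if its binary representation $w=w_1\cdots w_L$ (most significant digit first, no leading zeros) has even length $L$ and satisfies $w_i+w_{L+1-i}=1$ for all $i$ (the second half is the reverse complement of the first half). *)

theory Defs
  imports Complex_Main "HOL-Library.Landau_Symbols"
begin

definition bdigit :: "nat \<Rightarrow> nat \<Rightarrow> nat" where
  "bdigit n k = (n div 2 ^ k) mod 2"

text \<open>n is antipalindromic: its binary representation (no leading zeros) has even
  length L (i.e. 2^(L-1) \<le> n < 2^L) and w_i + w_(L+1-i) = 1 for all i; with positions
  counted from the least significant digit this is digit k + digit (L-1-k) = 1.\<close>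
definition antipalindromic :: "nat \<Rightarrow> bool" where
  "antipalindromic n \<longleftrightarrow> 0 < n \<and> (\<exists>L. even L \<and> 2 ^ (L - 1) \<le> n \<and> n < 2 ^ L \<and>
      (\<forall>k<L. bdigit n k + bdigit n (L - 1 - k) = 1))"

end

theory Submission
  imports Defs
begin

text \<open>
  An antipalindrome with \<open>2h\<close> digits is determined by its lower \<open>h\<close> digits, which are
  arbitrary except that the lowest one must be \<open>0\<close> (the leading digit is its complement); so
  every antipalindrome is even. As \<open>2 = 10\<^sub>2\<close> and \<open>10 = 1010\<^sub>2\<close> are antipalindromes,
  halving the antipalindromes with \<open>2h\<close> digits gives \<open>2^(h-1)\<close> quotients with \<open>2h - 1\<close> digits.

  For quotients with \<open>2h - 4\<close> digits divide by \<open>10\<close>: setting lower digits \<open>1\<close> and \<open>2\<close> makes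
  the word start with \<open>100\<close>, which puts its tenth in the right range. Flipping lower digit \<open>k\<close>
  changes the word by \<open>2^k - 2^(2h-1-k)\<close>, a unit modulo \<open>5\<close>, and the subset sums of any four
  units modulo \<open>5\<close> cover all residues; so lower digits \<open>3, ..., 6\<close> can be chosen to make the
  word divisible by \<open>5\<close>, leaving \<open>2^(h-7)\<close> free choices. Both counts are of order
  \<open>sqrt 2 ^ i\<close> for \<open>i\<close> digits.
\<close>

lemma bdigit_eq_of_bool_bit: "bdigit n k = of_bool (bit n k)"
  by (simp add: bdigit_def bit_iff_odd odd_iff_mod_2_eq_one)

lemma bit_sum_two_powers:
  assumes "finite T"
  shows "bit (\<Sum>k\<in>T. 2 ^ k :: nat) j \<longleftrightarrow> j \<in> T"
  using assms
proof (induction T arbitrary: j)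
  case empty
  then show ?case by simp
next
  case (insert k T)
  have "\<not> bit (2 ^ k :: nat) n \<or> \<not> bit (\<Sum>i\<in>T. 2 ^ i :: nat) n" for n
    using insert by (auto simp: bit_exp_iff)
  then show ?case
    using insert by (auto simp: bit_disjunctive_add_iff bit_exp_iff)
qed

lemma sum_two_powers_less:
  assumes "T \<subseteq> {..<m}"
  shows "(\<Sum>k\<in>T. 2 ^ k :: nat) < 2 ^ m"
proof -
  have "(\<Sum>k\<in>T. 2 ^ k :: nat) \<le> (\<Sum>k<m. 2 ^ k)"
    using assms by (intro sum_mono2) auto
  also have "\<dots> = 2 ^ m - 1"
    using sum_power2[of m] by (simp add: atLeast0LessThan)
  finally show ?thesis
    using zero_less_power[of "2::nat" m] by linarith
qed

definition antipal_word :: "nat \<Rightarrow> nat set \<Rightarrow> nat" where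
  "antipal_word h S = (\<Sum>k<h. if k \<in> S then 2 ^ k else 2 ^ (2 * h - 1 - k))"

definition antipal_support :: "nat \<Rightarrow> nat set \<Rightarrow> nat set" where
  "antipal_support h S = S \<union> (\<lambda>k. 2 * h - 1 - k) ` ({..<h} - S)"

lemma antipal_word_eq_sum_support:
  assumes "S \<subseteq> {..<h}"
  shows "antipal_word h S = (\<Sum>k\<in>antipal_support h S. 2 ^ k)"
proof -
  have "antipal_word h S = (\<Sum>k\<in>S. 2 ^ k) + (\<Sum>k\<in>{..<h} - S. 2 ^ (2 * h - 1 - k))"
    unfolding antipal_word_def using assms by (simp add: sum.If_cases Int_absorb1 Diff_eq)
  also have "(\<Sum>k\<in>{..<h} - S. 2 ^ (2 * h - 1 - k) :: nat)
      = (\<Sum>k\<in>(\<lambda>k. 2 * h - 1 - k) ` ({..<h} - S). 2 ^ k)"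
    by (subst sum.reindex) (auto simp: inj_on_def)
  also have "(\<Sum>k\<in>S. 2 ^ k) + \<dots> = (\<Sum>k\<in>antipal_support h S. 2 ^ k)"
    unfolding antipal_support_def using assms finite_subset
    by (intro sum.union_disjoint[symmetric]) auto
  finally show ?thesis .
qed

lemma antipal_support_lower_half:
  assumes "S \<subseteq> {..<h}" "k < h"
  shows "k \<in> antipal_support h S \<longleftrightarrow> k \<in> S"
    and "2 * h - 1 - k \<in> antipal_support h S \<longleftrightarrow> k \<notin> S"
proof -
  have mirror_inj: "inj_on (\<lambda>x. 2 * h - 1 - x) {..<h}"
    by (auto simp: inj_on_def)
  have mirror_ge: "h \<le> 2 * h - 1 - x" if "x < h" for x
    using that by arith
  show "k \<in> antipal_support h S \<longleftrightarrow> k \<in> S"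
    using assms(2) mirror_ge unfolding antipal_support_def by force
  have "2 * h - 1 - k \<notin> S"
    using assms mirror_ge[of k] by auto
  then show "2 * h - 1 - k \<in> antipal_support h S \<longleftrightarrow> k \<notin> S"
    using assms(2) inj_on_image_mem_iff[OF mirror_inj, of k "{..<h} - S"]
    unfolding antipal_support_def by auto
qed

lemma antipal_support_mirror:
  assumes "S \<subseteq> {..<h}" "k < 2 * h"
  shows "2 * h - 1 - k \<in> antipal_support h S \<longleftrightarrow> k \<notin> antipal_support h S"
proof (cases "k < h")
  case True
  then show ?thesis
    using antipal_support_lower_half[OF assms(1) True] by blast
next
  case False
  then obtain j where j: "j < h" "k = 2 * h - 1 - j" "2 * h - 1 - k = j"
    using assms(2) by (intro that[of "2 * h - 1 - k"]) arith+
  show ?thesis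
    unfolding j(3) unfolding j(2) using antipal_support_lower_half[OF assms(1) j(1)] by blast
qed

lemma antipal_support_subset:
  assumes "S \<subseteq> {..<h}"
  shows "antipal_support h S \<subseteq> {..<2 * h}"
  using assms unfolding antipal_support_def by auto

lemma bit_antipal_word:
  assumes "S \<subseteq> {..<h}"
  shows "bit (antipal_word h S) j \<longleftrightarrow> j \<in> antipal_support h S"
proof -
  have "finite (antipal_support h S)"
    using antipal_support_subset[OF assms] finite_subset by blast
  then show ?thesis
    using assms by (simp add: antipal_word_eq_sum_support bit_sum_two_powers)
qed

lemma antipal_word_less:
  assumes "S \<subseteq> {..<h}"
  shows "antipal_word h S < 2 ^ (2 * h)"
  using assms by (simp add: antipal_word_eq_sum_support sum_two_powers_less antipal_support_subset)

lemma antipal_word_ge: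
  assumes "S \<subseteq> {..<h}" "0 < h" "0 \<notin> S"
  shows "2 ^ (2 * h - 1) \<le> antipal_word h S"
proof -
  have "2 * h - 1 \<in> antipal_support h S"
    using antipal_support_lower_half(2)[OF assms(1,2)] assms(3) by simp
  then show ?thesis
    unfolding antipal_word_eq_sum_support[OF assms(1)]
    using antipal_support_subset[OF assms(1)] finite_subset
    by (intro member_le_sum) auto
qed

lemma antipal_word_less_of_1_2_mem:
  assumes "S \<subseteq> {..<h}" "3 \<le> h" "1 \<in> S" "2 \<in> S"
  shows "antipal_word h S < 2 ^ (2 * h - 1) + 2 ^ (2 * h - 3)"
proof -
  have "2 * h - 1 - k \<in> insert (2 * h - 1) {..<2 * h - 3}" if "k < h" "k \<notin> S" for k
  proof -
    have "k \<noteq> 1" "k \<noteq> 2"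
      using that(2) assms(3,4) by auto
    then have "k = 0 \<or> 3 \<le> k"
      by arith
    then show ?thesis
      using that by auto
  qed
  then have "antipal_support h S \<subseteq> insert (2 * h - 1) {..<2 * h - 3}"
    using assms(1,2) unfolding antipal_support_def by auto
  then have "antipal_word h S \<le> (\<Sum>k\<in>insert (2 * h - 1) {..<2 * h - 3}. 2 ^ k)"
    unfolding antipal_word_eq_sum_support[OF assms(1)] by (intro sum_mono2) auto
  also have "\<dots> = 2 ^ (2 * h - 1) + (\<Sum>k<2 * h - 3. 2 ^ k)"
    by simp
  also have "\<dots> < 2 ^ (2 * h - 1) + 2 ^ (2 * h - 3)"
    using sum_two_powers_less[of "{..<2 * h - 3}"] by simp
  finally show ?thesis .
qed

lemma even_antipal_word:
  assumes "S \<subseteq> {..<h}" "0 \<notin> S"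
  shows "even (antipal_word h S)"
proof (cases "h = 0")
  case True
  then show ?thesis by (simp add: antipal_word_def)
next
  case False
  then have "\<not> bit (antipal_word h S) 0"
    using assms by (simp add: bit_antipal_word antipal_support_lower_half(1))
  then show ?thesis by (simp add: bit_0)
qed

lemma antipalindromic_antipal_word:
  assumes "S \<subseteq> {..<h}" "0 < h" "0 \<notin> S"
  shows "antipalindromic (antipal_word h S)"
  unfolding antipalindromic_def
proof (intro conjI exI[of _ "2 * h"] allI impI)
  show "2 ^ (2 * h - 1) \<le> antipal_word h S" "antipal_word h S < 2 ^ (2 * h)"
    using antipal_word_ge[OF assms] antipal_word_less[OF assms(1)] .
  then show "0 < antipal_word h S"
    using zero_less_power[of "2::nat" "2 * h - 1"] by linarith
  show "bdigit (antipal_word h S) k + bdigit (antipal_word h S) (2 * h - 1 - k) = 1"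
    if "k < 2 * h" for k
    using antipal_support_mirror[OF assms(1) that]
    by (simp add: bdigit_eq_of_bool_bit bit_antipal_word[OF assms(1)])
qed simp

lemma inj_on_antipal_word: "inj_on (antipal_word h) (Pow {..<h})"
proof (rule inj_onI)
  fix S S' assume S: "S \<in> Pow {..<h}" and S': "S' \<in> Pow {..<h}"
    and eq: "antipal_word h S = antipal_word h S'"
  have "antipal_support h S = antipal_support h S'"
    using eq bit_antipal_word[of S h] bit_antipal_word[of S' h] S S' by auto
  then show "S = S'"
    using antipal_support_lower_half(1)[of S h] antipal_support_lower_half(1)[of S' h] S S'
    by blast
qed

lemma int_antipal_word:
  assumes "S \<subseteq> {..<h}"
  shows "int (antipal_word h S)
    = (\<Sum>k<h. 2 ^ (2 * h - 1 - k)) + (\<Sum>k\<in>S. 2 ^ k - 2 ^ (2 * h - 1 - k))"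
proof -
  have "int (antipal_word h S)
      = (\<Sum>k<h. 2 ^ (2 * h - 1 - k)
          + (if k \<in> S then 2 ^ k - 2 ^ (2 * h - 1 - k) else 0 :: int))"
    unfolding antipal_word_def of_nat_sum by (intro sum.cong) auto
  also have "\<dots> = (\<Sum>k<h. 2 ^ (2 * h - 1 - k))
      + (\<Sum>k\<in>{..<h} \<inter> S. 2 ^ k - 2 ^ (2 * h - 1 - k) :: int)"
    unfolding sum.distrib sum.inter_restrict[OF finite_lessThan] ..
  finally show ?thesis
    using assms by (simp add: Int_absorb1)
qed

lemma shift_closed_residues_eq_all:
  fixes m c :: int
  assumes "coprime c m" "R \<subseteq> {0..<m}" "R \<noteq> {}" "\<And>x. x \<in> R \<Longrightarrow> (x + c) mod m \<in> R"
  shows "R = {0..<m}"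
proof
  obtain x where x: "x \<in> R"
    using assms(3) by blast
  then have x_range: "0 \<le> x" "x < m"
    using assms(2) by auto
  have orbit: "(x + int n * c) mod m \<in> R" for n
  proof (induction n)
    case 0
    show ?case
      using x x_range by simp
  next
    case (Suc n)
    have "((x + int n * c) mod m + c) mod m = (x + int n * c + c) mod m"
      by (rule mod_add_left_eq)
    also have "\<dots> = (x + int (Suc n) * c) mod m"
      by (simp add: algebra_simps)
    finally have "((x + int n * c) mod m + c) mod m = (x + int (Suc n) * c) mod m" .
    then show ?case
      using assms(4)[OF Suc] by simp
  qed
  show "{0..<m} \<subseteq> R"
  proof
    fix y assume y: "y \<in> {0..<m}"
    have "gcd c m = 1"
      using assms(1) by (rule coprime_imp_gcd_eq_1)
    then obtain u v where uv: "u * c + v * m = 1"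
      using bezout_int[of c m] by auto
    define n where "n = nat ((y - x) * u mod m)"
    have n_eq: "int n = (y - x) * u mod m"
      using y unfolding n_def by simp
    have "(x + int n * c) mod m = (x + (y - x) * u * c) mod m"
      unfolding n_eq by (intro mod_add_cong refl mod_mult_left_eq)
    also have "x + (y - x) * u * c = y + (- (y - x) * v) * m"
      using uv by algebra
    also have "(y + (- (y - x) * v) * m) mod m = y"
      using y by simp
    finally show "y \<in> R"
      using orbit[of n] by simp
  qed
qed (use assms(2) in blast)

definition subset_sum_residues :: "('a \<Rightarrow> int) \<Rightarrow> int \<Rightarrow> 'a set \<Rightarrow> int set" where
  "subset_sum_residues d m K = (\<lambda>J. (\<Sum>k\<in>J. d k) mod m) ` Pow K"

lemma subset_sum_residues_subset:
  assumes "0 < m"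
  shows "subset_sum_residues d m K \<subseteq> {0..<m}"
  using assms unfolding subset_sum_residues_def by auto

lemma subset_sum_residues_insert:
  assumes "finite K" "k \<notin> K"
  shows "subset_sum_residues d m (insert k K)
    = subset_sum_residues d m K \<union> (\<lambda>x. (x + d k) mod m) ` subset_sum_residues d m K"
proof -
  have "(\<Sum>j\<in>insert k J. d j) mod m = ((\<Sum>j\<in>J. d j) mod m + d k) mod m" if "J \<subseteq> K" for J
  proof -
    have "finite J" "k \<notin> J"
      using that assms finite_subset by auto
    then show ?thesis
      by (simp add: mod_add_right_eq add.commute)
  qed
  then show ?thesis
    unfolding subset_sum_residues_def Pow_insert image_Un image_image by auto
qed

text \<open>Each new summand coprime to \<open>m\<close> enlarges the set of residues unless it is already
  everything, since a proper nonempty set of residues is not closed under that shift.\<close>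

lemma card_subset_sum_residues_ge:
  assumes "0 < m" "finite K" "\<And>k. k \<in> K \<Longrightarrow> coprime (d k) m"
  shows "min m (int (card K) + 1) \<le> int (card (subset_sum_residues d m K))"
  using assms(2,3)
proof (induction K rule: finite_induct)
  case empty
  then show ?case by (simp add: subset_sum_residues_def)
next
  case (insert k K)
  let ?R = "subset_sum_residues d m"
  show ?case
  proof (cases "(\<lambda>x. (x + d k) mod m) ` ?R K \<subseteq> ?R K")
    case True
    have "?R K = {0..<m}"
    proof (rule shift_closed_residues_eq_all)
      show "coprime (d k) m"
        using insert.prems by simp
      show "?R K \<subseteq> {0..<m}"
        using assms(1) by (rule subset_sum_residues_subset)
      show "?R K \<noteq> {}"
        unfolding subset_sum_residues_def by blast
      show "(x + d k) mod m \<in> ?R K" if "x \<in> ?R K" for x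
        using True that by blast
    qed
    then have "?R (insert k K) = {0..<m}"
      using subset_sum_residues_insert[OF insert(1,2)] True by blast
    then show ?thesis
      using assms(1) by simp
  next
    case False
    then have "?R K \<subset> ?R (insert k K)"
      unfolding subset_sum_residues_insert[OF insert(1,2)] by blast
    then have "card (?R K) < card (?R (insert k K))"
      using finite_subset[OF subset_sum_residues_subset[OF assms(1)]]
      by (intro psubset_card_mono) auto
    then show ?thesis
      using insert by simp
  qed
qed

lemma subset_sums_cover_residues:
  fixes d :: "'a \<Rightarrow> int" and m :: int
  assumes "0 < m" "finite K" "m \<le> int (card K) + 1" "\<And>k. k \<in> K \<Longrightarrow> coprime (d k) m"
  shows "\<exists>J\<subseteq>K. m dvd r + (\<Sum>k\<in>J. d k)"
proof -
  let ?R = "subset_sum_residues d m K"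
  have "min m (int (card K) + 1) \<le> int (card ?R)"
    by (rule card_subset_sum_residues_ge) (use assms in auto)
  then have "m \<le> int (card ?R)"
    using assms(3) by linarith
  moreover have "card ?R \<le> nat m"
    using card_mono[OF _ subset_sum_residues_subset[OF assms(1)]] by simp
  ultimately have "card ?R = card {0..<m}"
    by simp
  then have "?R = {0..<m}"
    using subset_sum_residues_subset[OF assms(1)] by (intro card_subset_eq) simp_all
  then have "(- r) mod m \<in> ?R"
    using assms(1) by simp
  then obtain J where J: "J \<in> Pow K" "(- r) mod m = (\<Sum>k\<in>J. d k) mod m"
    unfolding subset_sum_residues_def by (rule imageE)
  then have "m dvd (- r) - (\<Sum>k\<in>J. d k)"
    by (simp only: mod_eq_dvd_iff)
  then have "m dvd r + (\<Sum>k\<in>J. d k)"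
    using dvd_minus_iff[of m "- r - (\<Sum>k\<in>J. d k)"] by (simp add: ac_simps)
  then show ?thesis
    using J(1) by blast
qed

lemma coprime_two_power_diff_5:
  assumes "a \<le> b" "odd (b - a)"
  shows "coprime ((2::int) ^ a - 2 ^ b) 5"
proof -
  obtain n where b: "b = a + (2 * n + 1)"
    using assms by (metis add_diff_inverse_nat not_less oddE)
  have four_power: "(4::int) ^ n mod 5 = (if even n then 1 else 4)"
  proof (induction n)
    case (Suc n)
    have "(4::int) ^ Suc n mod 5 = (4 * (4 ^ n mod 5)) mod 5"
      by (simp add: mod_mult_right_eq)
    then show ?case
      using Suc by auto
  qed simp
  have "((2::int) * 4 ^ n - 1) mod 5 = (2 * (4 ^ n mod 5) - 1) mod 5"
    by (intro mod_diff_cong refl mod_mult_right_eq[symmetric])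
  then have "((2::int) * 4 ^ n - 1) mod 5 \<in> {1, 2}"
    unfolding four_power by auto
  then have "coprime (((2::int) * 4 ^ n - 1) mod 5) 5"
    by (auto simp del: coprime_mod_left_iff)
  then have "coprime ((2::int) * 4 ^ n - 1) 5"
    by simp
  moreover have "(4::int) ^ n = 2 ^ (2 * n)"
    by (simp add: power_mult)
  then have "(2::int) ^ a - 2 ^ b = - (2 ^ a * (2 * 4 ^ n - 1))"
    unfolding b by (simp add: power_add algebra_simps)
  ultimately show ?thesis
    by simp
qed

lemma antipal_word_dvd_5_choice:
  assumes "S \<subseteq> {..<h}" "G \<subseteq> {..<h}" "S \<inter> G = {}" "4 \<le> card G"
  shows "\<exists>J\<subseteq>G. 5 dvd antipal_word h (S \<union> J)"
proof -
  define d where "d k = (2::int) ^ k - 2 ^ (2 * h - 1 - k)" for k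
  define base where "base = (\<Sum>k<h. 2 ^ (2 * h - 1 - k) :: int)"
  have "\<exists>J\<subseteq>G. 5 dvd (base + (\<Sum>k\<in>S. d k)) + (\<Sum>k\<in>J. d k)"
  proof (rule subset_sums_cover_residues)
    show "finite G"
      using assms(2) finite_subset by blast
    show "5 \<le> int (card G) + 1"
      using assms(4) by simp
    show "coprime (d k) 5" if "k \<in> G" for k
    proof -
      have "k < h"
        using that assms(2) by blast
      then have "k \<le> 2 * h - 1 - k" "2 * h - 1 - k - k = 2 * (h - k - 1) + 1"
        by arith+
      then show ?thesis
        unfolding d_def by (intro coprime_two_power_diff_5) simp_all
    qed
  qed simp
  then obtain J where J: "J \<subseteq> G" "5 dvd (base + (\<Sum>k\<in>S. d k)) + (\<Sum>k\<in>J. d k)"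
    by blast
  have "int (antipal_word h (S \<union> J)) = base + (\<Sum>k\<in>S \<union> J. d k)"
    unfolding base_def d_def by (rule int_antipal_word) (use assms(1,2) J(1) in blast)
  also have "\<dots> = (base + (\<Sum>k\<in>S. d k)) + (\<Sum>k\<in>J. d k)"
  proof -
    have "S \<subseteq> {..<h}" "J \<subseteq> {..<h}" "S \<inter> J = {}"
      using assms J(1) by auto
    moreover from this(1,2) have "finite S" "finite J"
      by (auto intro: finite_subset[OF _ finite_lessThan])
    ultimately show ?thesis
      by (simp add: sum.union_disjoint)
  qed
  finally have "int 5 dvd int (antipal_word h (S \<union> J))"
    using J(2) by simp
  then have "5 dvd antipal_word h (S \<union> J)"
    by (simp only: of_nat_dvd_iff)
  then show ?thesis
    using J(1) by blast
qed

definition antipal_quotients :: "nat \<Rightarrow> nat set" where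
  "antipal_quotients i = {N. 2 ^ (i - 1) \<le> N \<and> N < 2 ^ i \<and>
     (\<exists>A B. antipalindromic A \<and> antipalindromic B \<and> A = N * B)}"

lemma antipalindromic_2: "antipalindromic 2"
  using antipalindromic_antipal_word[of "{}" 1] by (simp add: antipal_word_def)

lemma antipalindromic_10: "antipalindromic 10"
  using antipalindromic_antipal_word[of "{1}" 2] by (simp add: antipal_word_def eval_nat_numeral)

lemma antipal_word_div_2_mem_antipal_quotients:
  assumes "S \<subseteq> {..<h}" "0 < h" "0 \<notin> S"
  shows "antipal_word h S div 2 \<in> antipal_quotients (2 * h - 1)"
proof -
  define n where "n = 2 * h - 2"
  have n: "2 * h - 1 = Suc n" "2 * h = Suc (Suc n)"
    using assms(2) unfolding n_def by arith+
  have "2 ^ Suc n \<le> antipal_word h S"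
    using antipal_word_ge[OF assms] unfolding n(1) .
  moreover have "antipal_word h S < 2 ^ Suc (Suc n)"
    using antipal_word_less[OF assms(1)] unfolding n(2) .
  moreover have "antipal_word h S = antipal_word h S div 2 * 2"
    using even_antipal_word[OF assms(1,3)] by simp
  ultimately show ?thesis
    using antipalindromic_antipal_word[OF assms] antipalindromic_2
    unfolding antipal_quotients_def n by auto
qed

lemma ten_dvd_antipal_word:
  assumes "S \<subseteq> {..<h}" "0 \<notin> S" "5 dvd antipal_word h S"
  shows "10 dvd antipal_word h S"
proof -
  have "2 * 5 dvd antipal_word h S"
    using even_antipal_word[OF assms(1,2)] assms(3) by (intro divides_mult) simp_all
  then show ?thesis
    by simp
qed

lemma antipal_word_div_10_mem_antipal_quotients:
  assumes "S \<subseteq> {..<h}" "3 \<le> h" "0 \<notin> S" "1 \<in> S" "2 \<in> S" "5 dvd antipal_word h S"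
  shows "antipal_word h S div 10 \<in> antipal_quotients (2 * h - 4)"
proof -
  define n where "n = 2 * h - 5"
  have n: "2 * h - 4 = Suc n" "2 * h - 1 = n + 4" "2 * h - 3 = n + 2"
    using assms(2) unfolding n_def by arith+
  have h: "0 < h"
    using assms(2) by simp
  have ten: "antipal_word h S = antipal_word h S div 10 * 10"
    using ten_dvd_antipal_word[OF assms(1,3,6)] by simp
  have "(2::nat) ^ (n + 4) = 16 * 2 ^ n" "(2::nat) ^ (n + 2) = 4 * 2 ^ n"
    "(2::nat) ^ Suc n = 2 * 2 ^ n"
    by (simp_all add: power_add)
  moreover have "2 ^ (n + 4) \<le> antipal_word h S"
    using antipal_word_ge[OF assms(1) h assms(3)] unfolding n .
  moreover have "antipal_word h S < 2 ^ (n + 4) + 2 ^ (n + 2)"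
    using antipal_word_less_of_1_2_mem[OF assms(1,2,4,5)] unfolding n .
  ultimately have "2 ^ n \<le> antipal_word h S div 10" "antipal_word h S div 10 < 2 ^ Suc n"
    using ten by linarith+
  then show ?thesis
    using antipalindromic_antipal_word[OF assms(1) h assms(3)] antipalindromic_10 ten
    unfolding antipal_quotients_def n by auto
qed

lemma inj_on_antipal_word_div:
  assumes "A \<subseteq> Pow {..<h}" "\<And>S. S \<in> A \<Longrightarrow> c dvd antipal_word h S"
  shows "inj_on (\<lambda>S. antipal_word h S div c) A"
proof (rule inj_onI)
  fix S S' assume S: "S \<in> A" "S' \<in> A" and eq: "antipal_word h S div c = antipal_word h S' div c"
  have "antipal_word h S = c * (antipal_word h S div c)"
    using assms(2)[OF S(1)] by simp
  also have "\<dots> = antipal_word h S'"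
    using assms(2)[OF S(2)] unfolding eq by simp
  finally show "S = S'"
    by (rule inj_onD[OF inj_on_antipal_word]) (use S assms(1) in auto)
qed

lemma card_antipal_quotients_ge_card_Pow:
  assumes "finite F" "inj_on \<phi> (Pow F)" "\<phi> ` Pow F \<subseteq> antipal_quotients i"
  shows "2 ^ card F \<le> card (antipal_quotients i)"
proof -
  have "finite (antipal_quotients i)"
    by (rule finite_subset[of _ "{..<2 ^ i}"]) (auto simp: antipal_quotients_def)
  then show ?thesis
    using card_inj_on_le[OF assms(2,3)] card_Pow[OF assms(1)] by simp
qed

lemma card_antipal_quotients_odd:
  assumes "1 \<le> h"
  shows "2 ^ (h - 1) \<le> card (antipal_quotients (2 * h - 1))"
proof -
  have "2 ^ card {1..<h} \<le> card (antipal_quotients (2 * h - 1))"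
  proof (rule card_antipal_quotients_ge_card_Pow)
    show "inj_on (\<lambda>S. antipal_word h S div 2) (Pow {1..<h})"
    proof (rule inj_on_antipal_word_div)
      show "2 dvd antipal_word h S" if "S \<in> Pow {1..<h}" for S
        using that by (intro even_antipal_word) auto
    qed auto
    show "(\<lambda>S. antipal_word h S div 2) ` Pow {1..<h} \<subseteq> antipal_quotients (2 * h - 1)"
    proof (rule image_subsetI)
      show "antipal_word h S div 2 \<in> antipal_quotients (2 * h - 1)" if "S \<in> Pow {1..<h}" for S
        by (rule antipal_word_div_2_mem_antipal_quotients) (use that assms in auto)
    qed
  qed simp
  then show ?thesis
    by simp
qed

lemma card_antipal_quotients_even:
  assumes "7 \<le> h"
  shows "2 ^ (h - 7) \<le> card (antipal_quotients (2 * h - 4))"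
proof -
  define P where "P Z W \<longleftrightarrow> W \<subseteq> {..<h} \<and> 0 \<notin> W \<and> 1 \<in> W \<and> 2 \<in> W \<and>
    W \<inter> {7..<h} = Z \<and> 5 dvd antipal_word h W" for Z W
  define W where "W Z = (SOME W. P Z W)" for Z
  have W: "P Z (W Z)" if Z: "Z \<in> Pow {7..<h}" for Z
  proof -
    have "\<exists>J\<subseteq>{3..<7}. 5 dvd antipal_word h ({1, 2} \<union> Z \<union> J)"
    proof (rule antipal_word_dvd_5_choice)
      show "{1, 2} \<union> Z \<subseteq> {..<h}" "{3..<7} \<subseteq> {..<h}" "({1, 2} \<union> Z) \<inter> {3..<7} = {}"
        using Z assms by auto
    qed simp
    then obtain J where "J \<subseteq> {3..<7}" "5 dvd antipal_word h ({1, 2} \<union> Z \<union> J)"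
      by blast
    then have "P Z ({1, 2} \<union> Z \<union> J)"
      using Z assms unfolding P_def by auto
    then show ?thesis
      unfolding W_def by (rule someI)
  qed
  have "2 ^ card {7..<h} \<le> card (antipal_quotients (2 * h - 4))"
  proof (rule card_antipal_quotients_ge_card_Pow)
    have "inj_on W (Pow {7..<h})"
    proof (rule inj_onI)
      fix Z Z' assume Z: "Z \<in> Pow {7..<h}" "Z' \<in> Pow {7..<h}" and "W Z = W Z'"
      moreover have "Z = W Z \<inter> {7..<h}" "Z' = W Z' \<inter> {7..<h}"
        using W[OF Z(1)] W[OF Z(2)] unfolding P_def by simp_all
      ultimately show "Z = Z'"
        by simp
    qed
    moreover have "inj_on (\<lambda>S. antipal_word h S div 10) (W ` Pow {7..<h})"
    proof (rule inj_on_antipal_word_div)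
      show "W ` Pow {7..<h} \<subseteq> Pow {..<h}"
        using W unfolding P_def by auto
      show "10 dvd antipal_word h S" if S: "S \<in> W ` Pow {7..<h}" for S
      proof -
        obtain Z where "S = W Z" "Z \<in> Pow {7..<h}"
          using S by (rule imageE)
        then show ?thesis
          using W[of Z] unfolding P_def by (intro ten_dvd_antipal_word) auto
      qed
    qed
    ultimately show "inj_on ((\<lambda>S. antipal_word h S div 10) \<circ> W) (Pow {7..<h})"
      by (rule comp_inj_on)
    show "((\<lambda>S. antipal_word h S div 10) \<circ> W) ` Pow {7..<h} \<subseteq> antipal_quotients (2 * h - 4)"
    proof (rule image_subsetI)
      fix Z assume Z: "Z \<in> Pow {7..<h}"
      show "((\<lambda>S. antipal_word h S div 10) \<circ> W) Z \<in> antipal_quotients (2 * h - 4)"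
        unfolding o_def using W[OF Z] assms unfolding P_def
        by (intro antipal_word_div_10_mem_antipal_quotients) auto
    qed
  qed simp
  then show ?thesis
    by simp
qed

lemma sqrt_2_power_double: "sqrt 2 ^ (2 * m) = (2::real) ^ m"
  by (simp add: power_mult)

lemma sqrt_2_power_le_card_antipal_quotients:
  assumes "10 \<le> i"
  shows "sqrt 2 ^ i \<le> 32 * real (card (antipal_quotients i))"
proof (cases "even i")
  case True
  then obtain h where h: "i = 2 * h - 4" "7 \<le> h"
    using assms by (intro that[of "(i + 4) div 2"]) auto
  have "sqrt 2 ^ i = sqrt 2 ^ (2 * (h - 2))"
    using h by (simp add: algebra_simps)
  also have "\<dots> = 2 ^ (5 + (h - 7))"
    using h(2) by (simp add: sqrt_2_power_double)
  also have "\<dots> = 32 * 2 ^ (h - 7)"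
    by (simp add: power_add)
  also have "\<dots> \<le> 32 * real (card (antipal_quotients i))"
    using of_nat_mono[OF card_antipal_quotients_even[OF h(2)], where 'a = real]
    unfolding h(1) of_nat_power of_nat_numeral by simp
  finally show ?thesis .
next
  case False
  then obtain h where h: "i = 2 * h - 1" "1 \<le> h"
    using assms by (intro that[of "(i + 1) div 2"]) auto
  have "sqrt 2 ^ i \<le> sqrt 2 ^ (2 * h)"
    using h by (intro power_increasing) auto
  also have "\<dots> = 2 * 2 ^ (h - 1)"
    using h(2) by (simp add: sqrt_2_power_double flip: power_Suc)
  also have "\<dots> \<le> 32 * real (card (antipal_quotients i))"
    using of_nat_mono[OF card_antipal_quotients_odd[OF h(2)], where 'a = real]
    unfolding h(1) of_nat_power of_nat_numeral by linarith
  finally show ?thesis .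
qed

theorem theorem15:
  shows "(\<lambda>i::nat. real (card {N::nat. 2 ^ (i - 1) \<le> N \<and> N < 2 ^ i \<and>
            (\<exists>A B. antipalindromic A \<and> antipalindromic B \<and> A = N * B)}))
         \<in> \<Omega>(\<lambda>i. sqrt 2 ^ i)"
proof -
  have "eventually (\<lambda>i. norm (real (card (antipal_quotients i))) \<ge> 1 / 32 * norm (sqrt 2 ^ i))
    at_top"
    using eventually_ge_at_top[of 10]
    by eventually_elim (drule sqrt_2_power_le_card_antipal_quotients, simp)
  then have "(\<lambda>i. real (card (antipal_quotients i))) \<in> \<Omega>(\<lambda>i. sqrt 2 ^ i)"
    by (intro landau_omega.bigI[of "1 / 32"]) simp_all
  then show ?thesis
    unfolding antipal_quotients_def .
qed

end
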